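(* Let $\mathcal D$ be the derivation of $C^\infty(\mathfrak M,\mathbb R)$ given by $\mathcal D[F](g,J)=\frac{d}{dt}\big|_{t=0}F(g,J+t\mathbf 1_n)$, where $\mathbf 1_n$ is the $n\times n$ identity matrix, and for a bracket $\{\ ,\ \}$ define the Lie derivative bracket $\{F,H\}^{\mathcal D}=\mathcal D[\{F,H\}]-\{\mathcal D[F],H\}-\{F,\mathcal D[H]\}$. Then $\{F,H\}_1=\{F,H\}_2^{\mathcal D}$ for all $F,H\in C^\infty(\mathfrak M,\mathbb R)$. Consequently the Poisson brackets $\{\ ,\ \}_1$ and $\{\ ,\ \}_2$ are compatible, i.e. every real linear combination of them is again a Poisson bracket.
   Context: $G=\mathrm{GL}(n,\mathbb C)$ is regarded as a real Lie group with Lie algebra $\mathcal G=\mathfrak{gl}(n,\mathbb C)$ regarded as a real Lie algebra, equipped with the bilinear form $\langle X,Y\rangle=\Re\operatorname{tr}(XY)$. Every $X\in\mathcal G$ decomposes uniquely as $X=X_>+X_0+X_<$ (strictly upper triangular, diagonal, strictly lower triangular parts). Set $r(X)=\frac12(X_>-X_<)$, $r_\pm=r\pm\frac12\mathrm{id}$. Let $\mathfrak M=G\times\mathcal G=\{(g,J)\}$. For $F\in C^\infty(\mathfrak M,\mathbb R)$ define $\mathcal G$-valued derivatives by $\langle\nabla_1F(g,J),X\rangle=\frac{d}{dt}\big|_{t=0}F(e^{tX}g,J)$, $\langle\nabla_1'F(g,J),X\rangle=\frac{d}{dt}\big|_{t=0}F(ge^{tX},J)$, $\langle d_2F(g,J),X\rangle=\frac{d}{dt}\big|_{t=0}F(g,J+tX)$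 for all $X\in\mathcal G$, and $\nabla_2F=J\,d_2F$, $\nabla_2'F=(d_2F)\,J$. The Poisson brackets are $\{F,H\}_1=\langle \nabla_1F,d_2H\rangle-\langle\nabla_1H,d_2F\rangle+\langle J,[d_2F,d_2H]\rangle$ and $\{F,H\}_2=\langle r\nabla_1F,\nabla_1H\rangle-\langle r\nabla_1'F,\nabla_1'H\rangle+\langle \nabla_2F-\nabla_2'F, r_+\nabla_2'H-r_-\nabla_2H\rangle+\langle\nabla_1F, r_+\nabla_2'H-r_-\nabla_2H\rangle-\langle\nabla_1H, r_+\nabla_2'F-r_-\nabla_2F\rangle$ (derivatives at $(g,J)$). *)

theory Defs
  imports "HOL-Analysis.Analysis"
begin

type_synonym 'n cmat = "complex^'n^'n"
type_synonym 'n pt = "'n cmat \<times> 'n cmat"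

text \<open>Smooth (C-infinity) real functions on an open set S of a real normed space:
all iterated Frechet derivatives exist. d vs x is the iterated derivative in the
directions vs.\<close>
definition smooth_on :: "'a::real_normed_vector set \<Rightarrow> ('a \<Rightarrow> real) \<Rightarrow> bool" where
  "smooth_on S f \<longleftrightarrow> (\<exists>d :: 'a list \<Rightarrow> 'a \<Rightarrow> real.
      (\<forall>x\<in>S. d [] x = f x) \<and>
      (\<forall>vs. \<forall>x\<in>S. (d vs has_derivative (\<lambda>v. d (v # vs) x)) (at x)))"

definition MM :: "'n::finite pt set" where
  "MM = {(g, J). invertible g}"

definition mpow :: "'n::finite cmat \<Rightarrow> nat \<Rightarrow> 'n cmat" where
  "mpow X k = (((**) X) ^^ k) (mat 1)"

definition mexp :: "'n::finite cmat \<Rightarrow> 'n cmat" where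
  "mexp X = (\<Sum>k. (1 / fact k) *\<^sub>R mpow X k)"

definition ip :: "'n::finite cmat \<Rightarrow> 'n cmat \<Rightarrow> real" where
  "ip X Y = Re (trace (X ** Y))"

definition upper :: "'n::{finite,linorder} cmat \<Rightarrow> 'n cmat" where
  "upper X = (\<chi> i j. if i < j then X $ i $ j else 0)"

definition lower :: "'n::{finite,linorder} cmat \<Rightarrow> 'n cmat" where
  "lower X = (\<chi> i j. if j < i then X $ i $ j else 0)"

definition rr :: "'n::{finite,linorder} cmat \<Rightarrow> 'n cmat" where
  "rr X = (1/2) *\<^sub>R (upper X - lower X)"

definition rplus :: "'n::{finite,linorder} cmat \<Rightarrow> 'n cmat" where
  "rplus X = rr X + (1/2) *\<^sub>R X"

definition rminus :: "'n::{finite,linorder} cmat \<Rightarrow> 'n cmat" where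
  "rminus X = rr X - (1/2) *\<^sub>R X"

definition nabla1 :: "('n::finite pt \<Rightarrow> real) \<Rightarrow> 'n pt \<Rightarrow> 'n cmat" where
  "nabla1 F p = (THE Y. \<forall>X. ip Y X = deriv (\<lambda>t. F (mexp (t *\<^sub>R X) ** fst p, snd p)) 0)"

definition nabla1' :: "('n::finite pt \<Rightarrow> real) \<Rightarrow> 'n pt \<Rightarrow> 'n cmat" where
  "nabla1' F p = (THE Y. \<forall>X. ip Y X = deriv (\<lambda>t. F (fst p ** mexp (t *\<^sub>R X), snd p)) 0)"

definition d2 :: "('n::finite pt \<Rightarrow> real) \<Rightarrow> 'n pt \<Rightarrow> 'n cmat" where
  "d2 F p = (THE Y. \<forall>X. ip Y X = deriv (\<lambda>t. F (fst p, snd p + t *\<^sub>R X)) 0)"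

definition nabla2 :: "('n::finite pt \<Rightarrow> real) \<Rightarrow> 'n pt \<Rightarrow> 'n cmat" where
  "nabla2 F p = snd p ** d2 F p"

definition nabla2' :: "('n::finite pt \<Rightarrow> real) \<Rightarrow> 'n pt \<Rightarrow> 'n cmat" where
  "nabla2' F p = d2 F p ** snd p"

definition bracket1 :: "('n::finite pt \<Rightarrow> real) \<Rightarrow> ('n pt \<Rightarrow> real) \<Rightarrow> 'n pt \<Rightarrow> real" where
  "bracket1 F H p = ip (nabla1 F p) (d2 H p) - ip (nabla1 H p) (d2 F p)
      + ip (snd p) (d2 F p ** d2 H p - d2 H p ** d2 F p)"

definition bracket2 :: "('n::{finite,linorder} pt \<Rightarrow> real) \<Rightarrow> ('n pt \<Rightarrow> real) \<Rightarrow> 'n pt \<Rightarrow> real" where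
  "bracket2 F H p =
      ip (rr (nabla1 F p)) (nabla1 H p) - ip (rr (nabla1' F p)) (nabla1' H p)
    + ip (nabla2 F p - nabla2' F p) (rplus (nabla2' H p) - rminus (nabla2 H p))
    + ip (nabla1 F p) (rplus (nabla2' H p) - rminus (nabla2 H p))
    - ip (nabla1 H p) (rplus (nabla2' F p) - rminus (nabla2 F p))"

definition DD :: "('n::finite pt \<Rightarrow> real) \<Rightarrow> 'n pt \<Rightarrow> real" where
  "DD F p = deriv (\<lambda>t. F (fst p, snd p + t *\<^sub>R mat 1)) 0"

definition lieD ::
  "((('n::finite pt \<Rightarrow> real) \<Rightarrow> ('n pt \<Rightarrow> real) \<Rightarrow> 'n pt \<Rightarrow> real))
    \<Rightarrow> ('n pt \<Rightarrow> real) \<Rightarrow> ('n pt \<Rightarrow> real) \<Rightarrow> 'n pt \<Rightarrow> real" where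
  "lieD P F H p = DD (P F H) p - P (DD F) H p - P F (DD H) p"

definition poisson_bracket ::
  "(('n::finite pt \<Rightarrow> real) \<Rightarrow> ('n pt \<Rightarrow> real) \<Rightarrow> 'n pt \<Rightarrow> real) \<Rightarrow> bool" where
  "poisson_bracket P \<longleftrightarrow>
     (\<forall>F H. smooth_on MM F \<longrightarrow> smooth_on MM H \<longrightarrow> smooth_on MM (P F H)) \<and>
     (\<forall>F H K a b. smooth_on MM F \<longrightarrow> smooth_on MM H \<longrightarrow> smooth_on MM K \<longrightarrow>
        (\<forall>p\<in>MM.
          P (\<lambda>q. a * F q + b * H q) K p = a * P F K p + b * P H K p \<and>
          P F H p = - P H F p \<and>
          P F (\<lambda>q. H q * K q) p = P F H p * K p + H p * P F K p \<and>
          P F (P H K) p + P H (P K F) p + P K (P F H) p = 0))"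

end

theory Submission
  imports Defs
begin

text \<open>The derivation \<open>D\<close> differentiates along the flow \<open>J \<mapsto> J + t\<one>\<close>. By symmetry of second
  derivatives it commutes with the gradients \<open>\<nabla>\<^sub>1, \<nabla>\<^sub>1', d\<^sub>2\<close>, whereas \<open>\<nabla>\<^sub>2F = J d\<^sub>2F\<close> and
  \<open>\<nabla>\<^sub>2'F = (d\<^sub>2F) J\<close> pick up the extra term \<open>d\<^sub>2F\<close>. Since \<open>{F,H}\<^sub>2\<close> is a bilinear expression
  in the gradient data of \<open>F\<close> and \<open>H\<close>, the Lie derivative \<open>{F,H}\<^sub>2\<^sup>D\<close> consists of the terms
  containing one such \<open>d\<^sub>2\<close>; with \<open>r\<^sub>+ - r\<^sub>- = id\<close> and cyclicity of the trace these are exactly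
  \<open>{F,H}\<^sub>1\<close>.

  Compatibility is then formal: if \<open>Q = P\<^sup>D\<close> for a Poisson bracket \<open>P\<close>, the mixed Jacobiator
  of \<open>P\<close> and \<open>Q\<close> equals \<open>D\<close> of the Jacobiator of \<open>P\<close> minus three Jacobiators of \<open>P\<close> with one
  argument replaced by its \<open>D\<close>-derivative, so it vanishes, and \<open>aQ + bP\<close> satisfies the Jacobi
  identity.\<close>

section \<open>Smooth functions\<close>

text \<open>\<open>d (v # vs)\<close> is the derivative of \<open>d vs\<close> in direction \<open>v\<close>, so \<open>d [b, a]\<close> is
  \<open>\<partial>\<^sub>b \<partial>\<^sub>a f\<close>.\<close>

definition iterated_derivs_on ::
    "'a::real_normed_vector set \<Rightarrow> ('a \<Rightarrow> real) \<Rightarrow> ('a list \<Rightarrow> 'a \<Rightarrow> real) \<Rightarrow> bool" where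
  "iterated_derivs_on S f d \<longleftrightarrow> (\<forall>x\<in>S. d [] x = f x) \<and>
     (\<forall>vs. \<forall>x\<in>S. (d vs has_derivative (\<lambda>v. d (v # vs) x)) (at x))"

lemma smooth_on_iff_iterated_derivs: "smooth_on S f \<longleftrightarrow> (\<exists>d. iterated_derivs_on S f d)"
  by (simp add: smooth_on_def iterated_derivs_on_def)

lemma iterated_derivs_on_has_derivative:
  "iterated_derivs_on S f d \<Longrightarrow> x \<in> S \<Longrightarrow> (d vs has_derivative (\<lambda>v. d (v # vs) x)) (at x)"
  by (simp add: iterated_derivs_on_def)

lemma iterated_derivs_on_bounded_linear:
  "iterated_derivs_on S f d \<Longrightarrow> x \<in> S \<Longrightarrow> bounded_linear (\<lambda>v. d (v # vs) x)"
  using iterated_derivs_on_has_derivative has_derivative_bounded_linear by blast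

lemma iterated_derivs_on_has_derivative_base:
  assumes "iterated_derivs_on S f d" "open S" "x \<in> S"
  shows "(f has_derivative (\<lambda>v. d [v] x)) (at x)"
proof (rule has_derivative_transform_within_open)
  show "(d [] has_derivative (\<lambda>v. d [v] x)) (at x)"
    using iterated_derivs_on_has_derivative[OF assms(1,3)] .
qed (use assms in \<open>auto simp: iterated_derivs_on_def\<close>)

lemma iterated_derivs_on_DERIV_curve:
  assumes d: "iterated_derivs_on S f d" and "open S" "x \<in> S"
    and \<gamma>: "(\<gamma> has_vector_derivative v) (at t)" "\<gamma> t = x"
  shows "((\<lambda>s. f (\<gamma> s)) has_real_derivative d [v] x) (at t)"
proof -
  have "((\<lambda>s. f (\<gamma> s)) has_derivative (\<lambda>h. d [h *\<^sub>R v] x)) (at t)"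
    using has_derivative_compose[of \<gamma> _ t UNIV f] \<gamma>
      iterated_derivs_on_has_derivative_base[OF assms(1-3)]
    by (simp add: has_vector_derivative_def)
  then show ?thesis
    by (rule has_derivative_imp_has_field_derivative)
      (simp add: linear_scale[OF bounded_linear.linear[OF iterated_derivs_on_bounded_linear[OF d \<open>x \<in> S\<close>]]])
qed

lemma iterated_derivs_on_DERIV_line:
  assumes "iterated_derivs_on S f d" "y + s *\<^sub>R a \<in> S"
  shows "((\<lambda>s. d vs (y + s *\<^sub>R a)) has_real_derivative d (a # vs) (y + s *\<^sub>R a)) (at s)"
proof -
  interpret bounded_linear "\<lambda>v. d (v # vs) (y + s *\<^sub>R a)"
    using iterated_derivs_on_bounded_linear[OF assms] .
  have "((\<lambda>s. y + s *\<^sub>R a) has_derivative (\<lambda>s. s *\<^sub>R a)) (at s)"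
    by (auto intro!: derivative_eq_intros)
  from has_derivative_compose[OF this iterated_derivs_on_has_derivative[OF assms]]
  show ?thesis
    by (rule has_derivative_imp_has_field_derivative) (simp add: scale)
qed

lemma second_difference_mean_value:
  assumes d: "iterated_derivs_on S f d" and ball: "ball x r \<subseteq> S"
    and h: "0 < h" "h * (norm a + norm b) < r"
  obtains y where "dist y x \<le> h * (norm a + norm b)"
    "d [] (x + h *\<^sub>R a + h *\<^sub>R b) - d [] (x + h *\<^sub>R a) - d [] (x + h *\<^sub>R b) + d [] x
       = h\<^sup>2 * d [b, a] y"
proof -
  have near: "dist (x + s *\<^sub>R a + t *\<^sub>R b) x \<le> h * (norm a + norm b)"
    if "0 \<le> s" "s \<le> h" "0 \<le> t" "t \<le> h" for s t
  proof -
    have "dist (x + s *\<^sub>R a + t *\<^sub>R b) x = norm (s *\<^sub>R a + t *\<^sub>R b)"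
      by (simp add: dist_norm)
    also have "\<dots> \<le> norm (s *\<^sub>R a) + norm (t *\<^sub>R b)"
      by (rule norm_triangle_ineq)
    also have "\<dots> \<le> h * norm a + h * norm b"
      using that by (simp add: add_mono mult_right_mono)
    finally show ?thesis
      by (simp add: algebra_simps)
  qed
  have inS: "x + s *\<^sub>R a + t *\<^sub>R b \<in> S" if "0 \<le> s" "s \<le> h" "0 \<le> t" "t \<le> h" for s t
    using near[OF that] h ball by (auto simp: dist_commute)
  define \<phi> where "\<phi> s = d [] ((x + h *\<^sub>R b) + s *\<^sub>R a) - d [] (x + s *\<^sub>R a)" for s
  have "DERIV \<phi> s :> d [a] ((x + h *\<^sub>R b) + s *\<^sub>R a) - d [a] (x + s *\<^sub>R a)"
    if "0 \<le> s" "s \<le> h" for s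
    unfolding \<phi>_def[abs_def] using inS[of s h] inS[of s 0] that h
    by (intro DERIV_diff iterated_derivs_on_DERIV_line[OF d]) (simp_all add: algebra_simps)
  from MVT2[OF h(1) this] obtain \<xi> where \<xi>: "0 < \<xi>" "\<xi> < h"
    and \<phi>: "\<phi> h - \<phi> 0 = (h - 0) * (d [a] ((x + h *\<^sub>R b) + \<xi> *\<^sub>R a) - d [a] (x + \<xi> *\<^sub>R a))"
    by blast
  have "DERIV (\<lambda>t. d [a] ((x + \<xi> *\<^sub>R a) + t *\<^sub>R b)) t :> d [b, a] ((x + \<xi> *\<^sub>R a) + t *\<^sub>R b)"
    if "0 \<le> t" "t \<le> h" for t
    using inS[of \<xi> t] that \<xi> by (intro iterated_derivs_on_DERIV_line[OF d]) simp
  from MVT2[OF h(1) this] obtain \<eta> where \<eta>: "0 < \<eta>" "\<eta> < h"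
    and \<psi>: "d [a] ((x + \<xi> *\<^sub>R a) + h *\<^sub>R b) - d [a] ((x + \<xi> *\<^sub>R a) + 0 *\<^sub>R b)
             = (h - 0) * d [b, a] ((x + \<xi> *\<^sub>R a) + \<eta> *\<^sub>R b)"
    by blast
  have swap: "(x + h *\<^sub>R b) + \<xi> *\<^sub>R a = (x + \<xi> *\<^sub>R a) + h *\<^sub>R b"
    by (simp add: algebra_simps)
  have "d [] (x + h *\<^sub>R a + h *\<^sub>R b) - d [] (x + h *\<^sub>R a) - d [] (x + h *\<^sub>R b) + d [] x
      = \<phi> h - \<phi> 0"
    by (simp add: \<phi>_def add.commute add.left_commute)
  also have "\<dots> = h\<^sup>2 * d [b, a] (x + \<xi> *\<^sub>R a + \<eta> *\<^sub>R b)"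
    using \<phi> \<psi> unfolding swap by (simp add: power2_eq_square)
  finally have "d [] (x + h *\<^sub>R a + h *\<^sub>R b) - d [] (x + h *\<^sub>R a) - d [] (x + h *\<^sub>R b) + d [] x
      = h\<^sup>2 * d [b, a] (x + \<xi> *\<^sub>R a + \<eta> *\<^sub>R b)" .
  moreover have "dist (x + \<xi> *\<^sub>R a + \<eta> *\<^sub>R b) x \<le> h * (norm a + norm b)"
    using near[of \<xi> \<eta>] \<xi> \<eta> by simp
  ultimately show ?thesis
    using that by blast
qed

lemma second_difference_quotient_tendsto:
  assumes d: "iterated_derivs_on S f d" and "open S" "x \<in> S"
  shows "((\<lambda>h. (d [] (x + h *\<^sub>R a + h *\<^sub>R b) - d [] (x + h *\<^sub>R a) - d [] (x + h *\<^sub>R b) + d [] x)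
            / h\<^sup>2) \<longlongrightarrow> d [b, a] x) (at_right 0)"
proof (rule tendstoI)
  fix e :: real assume "e > 0"
  have "isCont (d [b, a]) x"
    using iterated_derivs_on_has_derivative[OF d \<open>x \<in> S\<close>] has_derivative_continuous by blast
  then obtain \<delta> where "\<delta> > 0" and \<delta>: "\<And>y. dist y x < \<delta> \<Longrightarrow> dist (d [b, a] y) (d [b, a] x) < e"
    using \<open>e > 0\<close> unfolding continuous_at_eps_delta by blast
  obtain r where "r > 0" and r: "ball x r \<subseteq> S"
    using assms(2,3) open_contains_ball by blast
  define R where "R = norm a + norm b"
  define B where "B = min r \<delta> / (R + 1)"
  have "B > 0"
    using \<open>r > 0\<close> \<open>\<delta> > 0\<close> by (simp add: B_def R_def add_nonneg_pos)
  moreover have "dist ((d [] (x + h *\<^sub>R a + h *\<^sub>R b) - d [] (x + h *\<^sub>R a) - d [] (x + h *\<^sub>R b)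
      + d [] x) / h\<^sup>2) (d [b, a] x) < e" if "0 < h" "h < B" for h
  proof -
    have "R \<ge> 0"
      by (simp add: R_def)
    have "h * R \<le> h * (R + 1)"
      using \<open>0 < h\<close> by simp
    also have "\<dots> < min r \<delta>"
      using that(2) \<open>R \<ge> 0\<close> by (simp add: B_def pos_less_divide_eq)
    finally have hR: "h * R < min r \<delta>" .
    then have "h * (norm a + norm b) < r"
      by (simp add: R_def)
    then obtain y where "dist y x \<le> h * R" and y:
      "d [] (x + h *\<^sub>R a + h *\<^sub>R b) - d [] (x + h *\<^sub>R a) - d [] (x + h *\<^sub>R b) + d [] x
         = h\<^sup>2 * d [b, a] y"
      using second_difference_mean_value[OF d r \<open>0 < h\<close>] unfolding R_def by blast
    have "dist y x < \<delta>"
      using \<open>dist y x \<le> h * R\<close> hR by simp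
    then show ?thesis
      using \<delta>[of y] \<open>0 < h\<close> by (simp add: y)
  qed
  ultimately show "\<forall>\<^sub>F h in at_right 0. dist ((d [] (x + h *\<^sub>R a + h *\<^sub>R b) - d [] (x + h *\<^sub>R a)
      - d [] (x + h *\<^sub>R b) + d [] x) / h\<^sup>2) (d [b, a] x) < e"
    unfolding eventually_at_right_field by (intro exI[of _ B]) auto
qed

lemma iterated_derivs_on_symmetric:
  assumes "iterated_derivs_on S f d" "open S" "x \<in> S"
  shows "d [a, b] x = d [b, a] x"
proof (rule tendsto_unique[OF trivial_limit_at_right_real])
  show "((\<lambda>h. (d [] (x + h *\<^sub>R a + h *\<^sub>R b) - d [] (x + h *\<^sub>R a) - d [] (x + h *\<^sub>R b) + d [] x)
      / h\<^sup>2) \<longlongrightarrow> d [b, a] x) (at_right 0)"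
    by (rule second_difference_quotient_tendsto[OF assms])
  show "((\<lambda>h. (d [] (x + h *\<^sub>R a + h *\<^sub>R b) - d [] (x + h *\<^sub>R a) - d [] (x + h *\<^sub>R b) + d [] x)
      / h\<^sup>2) \<longlongrightarrow> d [a, b] x) (at_right 0)"
    using second_difference_quotient_tendsto[OF assms, of b a] by (simp add: algebra_simps)
qed

lemma smooth_on_lincomb:
  assumes "smooth_on S f" "smooth_on S g"
  shows "smooth_on S (\<lambda>x. a * f x + b * g x)"
proof -
  obtain df dg where df: "iterated_derivs_on S f df" and dg: "iterated_derivs_on S g dg"
    using assms unfolding smooth_on_iff_iterated_derivs by blast
  have "iterated_derivs_on S (\<lambda>x. a * f x + b * g x) (\<lambda>vs x. a * df vs x + b * dg vs x)"
    unfolding iterated_derivs_on_def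
  proof (intro conjI ballI allI)
    fix x assume "x \<in> S"
    then show "a * df [] x + b * dg [] x = a * f x + b * g x"
      using df dg by (simp add: iterated_derivs_on_def)
  next
    fix vs x assume "x \<in> S"
    then show "((\<lambda>x. a * df vs x + b * dg vs x) has_derivative
        (\<lambda>v. a * df (v # vs) x + b * dg (v # vs) x)) (at x)"
      using iterated_derivs_on_has_derivative[OF df] iterated_derivs_on_has_derivative[OF dg]
      by (auto intro!: derivative_eq_intros)
  qed
  then show ?thesis
    unfolding smooth_on_iff_iterated_derivs by blast
qed

lemma smooth_on_diff:
  assumes "smooth_on S f" "smooth_on S g"
  shows "smooth_on S (\<lambda>x. f x - g x)"
  using smooth_on_lincomb[OF assms, of 1 "-1"] by simp

lemma smooth_on_indicator_compl:
  assumes "open S"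
  shows "smooth_on S (\<lambda>x. if x \<in> S then 0 else 1)"
proof -
  define d :: "'a list \<Rightarrow> 'a \<Rightarrow> real"
    where "d vs = (if vs = [] then (\<lambda>x. if x \<in> S then 0 else 1) else (\<lambda>x. 0))" for vs
  have "iterated_derivs_on S (\<lambda>x. if x \<in> S then 0 else 1) d"
    unfolding iterated_derivs_on_def
  proof (intro conjI ballI allI)
    fix vs and x :: 'a assume "x \<in> S"
    have "((\<lambda>x. if x \<in> S then 0 else 1 :: real) has_derivative (\<lambda>v. 0)) (at x)"
      by (rule has_derivative_transform_within_open[OF has_derivative_const assms \<open>x \<in> S\<close>]) simp
    then show "(d vs has_derivative (\<lambda>v. d (v # vs) x)) (at x)"
      by (simp add: d_def)
  qed (simp add: d_def)
  then show ?thesis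
    unfolding smooth_on_iff_iterated_derivs by blast
qed

section \<open>Matrix products and the exponential\<close>

lemma has_vector_derivative_at_0_of_quadratic_remainder:
  fixes f :: "real \<Rightarrow> 'a::real_normed_vector"
  assumes "\<delta> > 0" and rem: "\<And>t. \<bar>t\<bar> < \<delta> \<Longrightarrow> norm (f t - f 0 - t *\<^sub>R v) \<le> C * t\<^sup>2"
  shows "(f has_vector_derivative v) (at 0)"
proof -
  have "((\<lambda>h. norm (f h - f 0 - h *\<^sub>R v) / norm h) \<longlongrightarrow> 0) (at 0)"
  proof (rule Lim_null_comparison)
    have "\<forall>\<^sub>F h in at 0. \<bar>h\<bar> < \<delta>"
      using \<open>\<delta> > 0\<close> unfolding eventually_at by (intro exI[of _ \<delta>]) (auto simp: dist_real_def)
    then show "\<forall>\<^sub>F h in at 0. norm (norm (f h - f 0 - h *\<^sub>R v) / norm h) \<le> C * \<bar>h\<bar>"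
    proof (rule eventually_mono)
      fix h :: real assume "\<bar>h\<bar> < \<delta>"
      then have "norm (f h - f 0 - h *\<^sub>R v) / \<bar>h\<bar> \<le> C * h\<^sup>2 / \<bar>h\<bar>"
        using rem by (intro divide_right_mono) auto
      also have "\<dots> = C * \<bar>h\<bar>"
        by (cases "h = 0") (simp_all add: power2_eq_square field_simps abs_mult_self_eq)
      finally show "norm (norm (f h - f 0 - h *\<^sub>R v) / norm h) \<le> C * \<bar>h\<bar>"
        by simp
    qed
    show "((\<lambda>h. C * \<bar>h\<bar>) \<longlongrightarrow> 0) (at 0)"
      by (intro tendsto_mult_right_zero tendsto_rabs_zero tendsto_ident_at)
  qed
  then show ?thesis
    unfolding has_vector_derivative_def has_derivative_at
    by (simp add: bounded_linear_scaleR_left)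
qed

lemma bilinear_matrix_mult:
  "bilinear ((**) :: complex^'n::finite^'m::finite \<Rightarrow> complex^'p::finite^'n \<Rightarrow> complex^'p^'m)"
proof -
  have "linear (\<lambda>A :: complex^'n^'m. A ** B)" for B :: "complex^'p^'n"
    by (rule linearI)
      (simp_all add: matrix_matrix_mult_def vec_eq_iff sum.distrib distrib_right scaleR_sum_right)
  moreover have "linear (\<lambda>B :: complex^'p^'n. A ** B)" for A :: "complex^'n^'m"
    by (rule linearI)
      (simp_all add: matrix_matrix_mult_def vec_eq_iff sum.distrib distrib_left scaleR_sum_right)
  ultimately show ?thesis
    by (simp add: bilinear_def)
qed

interpretation matrix_mult:
  bounded_bilinear "(**) :: complex^'n::finite^'m::finite \<Rightarrow> complex^'p::finite^'n \<Rightarrow> complex^'p^'m"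
  by (rule bilinear_conv_bounded_bilinear[THEN iffD1, OF bilinear_matrix_mult])

lemma mpow_Suc: "mpow X (Suc k) = X ** mpow X k"
  by (simp add: mpow_def)

lemma mpow_scaleR: "mpow (t *\<^sub>R X) k = t ^ k *\<^sub>R mpow X k"
  by (induction k) (simp_all add: mpow_def matrix_mult.scaleR_left matrix_mult.scaleR_right)

lemma norm_mpow_le:
  fixes X :: "'n::finite cmat"
  assumes bound: "\<And>(A :: 'n cmat) (B :: 'n cmat). norm (A ** B) \<le> norm A * norm B * K" and "K \<ge> 0"
  shows "norm (mpow X k) \<le> norm (mat 1 :: 'n cmat) * (K * norm X) ^ k"
proof (induction k)
  case (Suc k)
  have "norm (mpow X (Suc k)) \<le> norm X * norm (mpow X k) * K"
    unfolding mpow_Suc by (rule bound)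
  also have "\<dots> \<le> norm X * (norm (mat 1 :: 'n cmat) * (K * norm X) ^ k) * K"
    using Suc \<open>K \<ge> 0\<close> by (intro mult_right_mono mult_left_mono) auto
  finally show ?case
    by (simp add: mult_ac)
qed (simp add: mpow_def)

lemma mexp_quadratic_remainder:
  fixes X :: "'n::finite cmat"
  obtains C where "\<And>t. \<bar>t\<bar> < 1 \<Longrightarrow> norm (mexp (t *\<^sub>R X) - mat 1 - t *\<^sub>R X) \<le> C * t\<^sup>2"
proof -
  obtain K where "K > 0" and K: "\<And>(A :: 'n cmat) (B :: 'n cmat). norm (A ** B) \<le> norm A * norm B * K"
    using matrix_mult.pos_bounded by blast
  define g where "g k = norm (mat 1 :: 'n cmat) * (inverse (fact k) * (K * norm X) ^ k)" for k
  have g: "summable g"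
    unfolding g_def by (intro summable_mult summable_exp)
  have g_nonneg: "g k \<ge> 0" for k
    using \<open>K > 0\<close> by (simp add: g_def)
  from g have g2: "summable (\<lambda>k. g (k + 2))"
    by (rule summable_ignore_initial_segment)
  have "norm (mexp (t *\<^sub>R X) - mat 1 - t *\<^sub>R X) \<le> (\<Sum>k. g (k + 2)) * t\<^sup>2" if "\<bar>t\<bar> < 1" for t
  proof -
    define u where "u k = (1 / fact k) *\<^sub>R mpow (t *\<^sub>R X) k" for k
    have u: "norm (u k) \<le> \<bar>t\<bar> ^ k * g k" for k
    proof -
      have "norm (u k) = \<bar>t\<bar> ^ k * (inverse (fact k) * norm (mpow X k))"
        by (simp add: u_def mpow_scaleR power_abs divide_inverse abs_mult)
      also have "\<dots> \<le> \<bar>t\<bar> ^ k * g k"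
        using norm_mpow_le[OF K, of X k] \<open>K > 0\<close> unfolding g_def
        by (intro mult_left_mono) (auto simp: mult.left_commute)
      finally show ?thesis .
    qed
    have "\<bar>t\<bar> ^ k * g k \<le> g k" for k
      using that g_nonneg by (intro mult_left_le_one_le) (auto simp: power_le_one)
    then have "summable u"
      using g u by (intro summable_comparison_test[of u g]) (auto intro: order_trans)
    then have "(\<lambda>k. u (k + 2)) sums (suminf u - (\<Sum>k<2. u k))"
      using sums_iff_shift[of u 2] by (simp add: summable_sums)
    moreover have "suminf u = mexp (t *\<^sub>R X)"
      by (simp add: mexp_def u_def[abs_def])
    moreover have "(\<Sum>k<2. u k) = mat 1 + t *\<^sub>R X"
      by (simp add: u_def numeral_2_eq_2 mpow_def)
    ultimately have "mexp (t *\<^sub>R X) - mat 1 - t *\<^sub>R X = (\<Sum>k. u (k + 2))"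
      by (simp add: sums_iff diff_diff_eq)
    also have "norm \<dots> \<le> (\<Sum>k. t\<^sup>2 * g (k + 2))"
    proof (rule norm_suminf_le)
      fix k
      have "\<bar>t\<bar> ^ (k + 2) = \<bar>t\<bar> ^ k * t\<^sup>2"
        by (simp only: power_add power2_abs)
      also have "\<dots> \<le> t\<^sup>2"
        using that by (intro mult_left_le_one_le) (auto simp: power_le_one)
      finally have "\<bar>t\<bar> ^ (k + 2) \<le> t\<^sup>2" .
      then show "norm (u (k + 2)) \<le> t\<^sup>2 * g (k + 2)"
        using u[of "k + 2"] g_nonneg[of "k + 2"] by (meson mult_right_mono order_trans)
    qed (use g2 in \<open>rule summable_mult\<close>)
    finally show ?thesis
      using suminf_mult[OF g2, of "t\<^sup>2"] by (simp add: mult.commute)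
  qed
  then show ?thesis
    using that by blast
qed

lemma mexp_zero: "mexp (0 :: 'n::finite cmat) = mat 1"
proof -
  obtain C where "\<And>t. \<bar>t\<bar> < 1 \<Longrightarrow> norm (mexp (t *\<^sub>R (0 :: 'n cmat)) - mat 1 - t *\<^sub>R 0) \<le> C * t\<^sup>2"
    using mexp_quadratic_remainder[of "0 :: 'n cmat"] by blast
  from this[of 0] show ?thesis
    by simp
qed

lemma has_vector_derivative_mexp_at_0:
  "((\<lambda>t. mexp (t *\<^sub>R X)) has_vector_derivative X) (at 0)"
proof -
  obtain C where "\<And>t. \<bar>t\<bar> < 1 \<Longrightarrow> norm (mexp (t *\<^sub>R X) - mat 1 - t *\<^sub>R X) \<le> C * t\<^sup>2"
    using mexp_quadratic_remainder[of X] by blast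
  then show ?thesis
    by (intro has_vector_derivative_at_0_of_quadratic_remainder[of 1]) (simp_all add: mexp_zero)
qed

section \<open>The pairing \<open>\<langle>X, Y\<rangle> = Re tr (XY)\<close>\<close>

definition conj_transpose :: "complex^'n::finite^'m::finite \<Rightarrow> complex^'m^'n" where
  "conj_transpose A = (\<chi> i j. cnj (A $ j $ i))"

lemma conj_transpose_conj_transpose [simp]: "conj_transpose (conj_transpose A) = A"
  by (simp add: conj_transpose_def vec_eq_iff)

lemma bounded_linear_conj_transpose: "bounded_linear conj_transpose"
  by (rule bounded_linearI') (simp_all add: conj_transpose_def vec_eq_iff)

lemma ip_eq_inner_conj_transpose: "ip Y X = inner (conj_transpose Y) X"
proof -
  have "ip Y X = (\<Sum>i\<in>UNIV. \<Sum>k\<in>UNIV. Re (Y $ i $ k * X $ k $ i))"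
    by (simp add: ip_def trace_def matrix_matrix_mult_def Re_sum)
  also have "\<dots> = (\<Sum>k\<in>UNIV. \<Sum>i\<in>UNIV. Re (Y $ i $ k * X $ k $ i))"
    by (rule sum.swap)
  also have "\<dots> = inner (conj_transpose Y) X"
    by (simp add: inner_vec_def conj_transpose_def inner_complex_def)
  finally show ?thesis .
qed

interpretation ip: bounded_bilinear "ip :: 'n::finite cmat \<Rightarrow> 'n cmat \<Rightarrow> real"
proof -
  have ip: "ip = (\<lambda>Y. inner (conj_transpose Y))"
    by (intro ext) (simp add: ip_eq_inner_conj_transpose)
  show "bounded_bilinear (ip :: 'n cmat \<Rightarrow> 'n cmat \<Rightarrow> real)"
    unfolding ip by (rule bounded_bilinear.comp1[OF bounded_bilinear_inner bounded_linear_conj_transpose])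
qed

lemma ip_ext: "(\<And>X. ip Y X = ip Z X) \<Longrightarrow> Y = Z"
  by (metis conj_transpose_conj_transpose euclidean_eqI ip_eq_inner_conj_transpose)

definition ip_repr :: "('n::finite cmat \<Rightarrow> real) \<Rightarrow> 'n cmat" where
  "ip_repr L = conj_transpose (\<Sum>b\<in>Basis. L b *\<^sub>R b)"

lemma ip_ip_repr:
  assumes "linear L"
  shows "ip (ip_repr L) X = L X"
proof -
  have "ip (ip_repr L) X = (\<Sum>b\<in>Basis. (X \<bullet> b) * L b)"
    by (simp add: ip_repr_def ip_eq_inner_conj_transpose inner_sum_right inner_commute mult.commute)
  also have "\<dots> = L (\<Sum>b\<in>Basis. (X \<bullet> b) *\<^sub>R b)"
    using assms by (simp add: linear_sum linear_scale)
  also have "\<dots> = L X"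
    by (simp add: euclidean_representation)
  finally show ?thesis .
qed

lemma The_ip_eq_ip_repr: "linear L \<Longrightarrow> (THE Y. \<forall>X. ip Y X = L X) = ip_repr L"
  by (rule the_equality) (auto intro: ip_ext simp: ip_ip_repr)

lemma has_vector_derivative_ip_repr:
  assumes "\<And>b. ((\<lambda>s. L s b) has_real_derivative L' b) (at t)"
  shows "((\<lambda>s. ip_repr (L s)) has_vector_derivative ip_repr L') (at t)"
proof -
  have "((\<lambda>s. L s b *\<^sub>R b) has_vector_derivative L' b *\<^sub>R b) (at t)" for b
    using assms[of b] bounded_linear.has_vector_derivative[OF bounded_linear_scaleR_left]
    by (simp add: has_real_derivative_iff_has_vector_derivative)
  then have "((\<lambda>s. \<Sum>b\<in>Basis. L s b *\<^sub>R b) has_vector_derivative (\<Sum>b\<in>Basis. L' b *\<^sub>R b)) (at t)"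
    by (rule has_vector_derivative_sum)
  then show ?thesis
    unfolding ip_repr_def by (rule bounded_linear.has_vector_derivative[OF bounded_linear_conj_transpose])
qed

section \<open>Gradients on the phase space\<close>

lemma continuous_on_det: "continuous_on UNIV (det :: 'n::finite cmat \<Rightarrow> complex)"
  unfolding det_def by (intro continuous_intros)

lemma open_MM: "open (MM :: 'n::finite pt set)"
proof -
  have "MM = {p :: 'n pt. det (fst p) \<noteq> 0}"
    by (auto simp: MM_def invertible_det_nz)
  moreover have "open {p :: 'n pt. det (fst p) \<noteq> 0}"
    by (intro open_Collect_neq continuous_intros continuous_on_compose2[OF continuous_on_det]) auto
  ultimately show ?thesis
    by simp
qed

definition unit_J :: "'n::finite pt" where
  "unit_J = (0, mat 1)"

lemma add_unit_J: "p + t *\<^sub>R unit_J = (fst p, snd p + t *\<^sub>R mat 1)"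
  by (simp add: unit_J_def prod_eq_iff)

lemma DD_eq_deriv_unit_J: "DD F p = deriv (\<lambda>t. F (p + t *\<^sub>R unit_J)) 0"
  unfolding DD_def add_unit_J ..

lemma fst_add_unit_J [simp]: "fst (p + t *\<^sub>R unit_J) = fst p"
  and snd_add_unit_J [simp]: "snd (p + t *\<^sub>R unit_J) = snd p + t *\<^sub>R mat 1"
  by (simp_all add: add_unit_J)

lemma add_unit_J_in_MM: "p \<in> MM \<Longrightarrow> p + t *\<^sub>R unit_J \<in> MM"
  by (auto simp: MM_def add_unit_J)

lemma gradient_eq_ip_repr:
  assumes d: "iterated_derivs_on MM F d" and p: "p \<in> MM" and W: "bounded_linear W"
    and \<gamma>: "\<And>X. (\<gamma> X has_vector_derivative W X) (at 0)" "\<And>X. \<gamma> X 0 = p"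
  shows "(THE Y. \<forall>X. ip Y X = deriv (\<lambda>t. F (\<gamma> X t)) 0) = ip_repr (\<lambda>X. d [W X] p)"
proof -
  have "deriv (\<lambda>t. F (\<gamma> X t)) 0 = d [W X] p" for X
    using iterated_derivs_on_DERIV_curve[OF d open_MM p \<gamma>] by (rule DERIV_imp_deriv)
  moreover have "linear (\<lambda>X. d [W X] p)"
    using bounded_linear_compose[OF iterated_derivs_on_bounded_linear[OF d p] W]
    by (rule bounded_linear.linear)
  ultimately show ?thesis
    by (simp add: The_ip_eq_ip_repr)
qed

lemma nabla1_eq_ip_repr:
  assumes "iterated_derivs_on MM F d" "p \<in> MM"
  shows "nabla1 F p = ip_repr (\<lambda>X. d [(X ** fst p, 0)] p)"
  unfolding nabla1_def
proof (rule gradient_eq_ip_repr[OF assms])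
  show "bounded_linear (\<lambda>X. (X ** fst p, 0 :: 'a cmat))"
    by (intro bounded_linear_Pair matrix_mult.bounded_linear_left bounded_linear_zero)
  show "((\<lambda>t. (mexp (t *\<^sub>R X) ** fst p, snd p)) has_vector_derivative (X ** fst p, 0)) (at 0)" for X
    by (intro has_vector_derivative_Pair has_vector_derivative_const
        bounded_linear.has_vector_derivative[OF matrix_mult.bounded_linear_left]
        has_vector_derivative_mexp_at_0)
qed (simp add: mexp_zero)

lemma nabla1'_eq_ip_repr:
  assumes "iterated_derivs_on MM F d" "p \<in> MM"
  shows "nabla1' F p = ip_repr (\<lambda>X. d [(fst p ** X, 0)] p)"
  unfolding nabla1'_def
proof (rule gradient_eq_ip_repr[OF assms])
  show "bounded_linear (\<lambda>X. (fst p ** X, 0 :: 'a cmat))"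
    by (intro bounded_linear_Pair matrix_mult.bounded_linear_right bounded_linear_zero)
  show "((\<lambda>t. (fst p ** mexp (t *\<^sub>R X), snd p)) has_vector_derivative (fst p ** X, 0)) (at 0)" for X
    by (intro has_vector_derivative_Pair has_vector_derivative_const
        bounded_linear.has_vector_derivative[OF matrix_mult.bounded_linear_right]
        has_vector_derivative_mexp_at_0)
qed (simp add: mexp_zero)

lemma d2_eq_ip_repr:
  assumes "iterated_derivs_on MM F d" "p \<in> MM"
  shows "d2 F p = ip_repr (\<lambda>X. d [(0, X)] p)"
  unfolding d2_def
proof (rule gradient_eq_ip_repr[OF assms])
  show "bounded_linear (\<lambda>X. (0 :: 'a cmat, X))"
    by (intro bounded_linear_Pair bounded_linear_zero bounded_linear_ident)
  show "((\<lambda>t. (fst p, snd p + t *\<^sub>R X)) has_vector_derivative (0, X)) (at 0)" for X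
    unfolding has_vector_derivative_def by (auto intro!: derivative_eq_intros)
qed simp

lemma DERIV_along_unit_J:
  assumes d: "iterated_derivs_on MM F d" and p: "p \<in> MM"
  shows "((\<lambda>t. F (p + t *\<^sub>R unit_J)) has_real_derivative d [unit_J] p) (at 0)"
proof -
  have "((\<lambda>t. p + t *\<^sub>R unit_J) has_vector_derivative unit_J) (at 0)"
    unfolding has_vector_derivative_def by (auto intro!: derivative_eq_intros)
  from iterated_derivs_on_DERIV_curve[OF d open_MM p this] show ?thesis
    by simp
qed

lemma DD_eq_iterated_deriv:
  assumes "iterated_derivs_on MM F d" "p \<in> MM"
  shows "DD F p = d [unit_J] p"
  unfolding DD_eq_deriv_unit_J by (rule DERIV_imp_deriv[OF DERIV_along_unit_J[OF assms]])

lemma iterated_derivs_on_DD: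
  assumes d: "iterated_derivs_on MM F d"
  shows "iterated_derivs_on MM (DD F) (\<lambda>vs. d (vs @ [unit_J]))"
  using DD_eq_iterated_deriv[OF d] iterated_derivs_on_has_derivative[OF d]
  by (simp add: iterated_derivs_on_def)

lemma smooth_on_DD: "smooth_on MM F \<Longrightarrow> smooth_on MM (DD F)"
  using iterated_derivs_on_DD unfolding smooth_on_iff_iterated_derivs by blast

lemma DERIV_DD:
  assumes "smooth_on MM F" "p \<in> MM"
  shows "((\<lambda>t. F (p + t *\<^sub>R unit_J)) has_real_derivative DD F p) (at 0)"
proof -
  obtain d where "iterated_derivs_on MM F d"
    using assms(1) unfolding smooth_on_iff_iterated_derivs by blast
  with assms(2) show ?thesis
    using DERIV_along_unit_J DD_eq_iterated_deriv by metis
qed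

lemma has_vector_derivative_ip_repr_along_unit_J:
  assumes d: "iterated_derivs_on MM F d" and p: "p \<in> MM"
  shows "((\<lambda>s. ip_repr (\<lambda>X. d [W X] (p + s *\<^sub>R unit_J))) has_vector_derivative
           ip_repr (\<lambda>X. d [W X, unit_J] p)) (at 0)"
proof (rule has_vector_derivative_ip_repr)
  fix X
  have "((\<lambda>s. d [W X] (p + s *\<^sub>R unit_J)) has_real_derivative d [unit_J, W X] (p + 0 *\<^sub>R unit_J)) (at 0)"
    using p by (intro iterated_derivs_on_DERIV_line[OF d]) simp
  then show "((\<lambda>s. d [W X] (p + s *\<^sub>R unit_J)) has_real_derivative d [W X, unit_J] p) (at 0)"
    using iterated_derivs_on_symmetric[OF d open_MM p, of unit_J "W X"] by simp
qed

section \<open>The first bracket is the Lie derivative of the second\<close>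

definition grad_data :: "('n::finite pt \<Rightarrow> real) \<Rightarrow> 'n pt \<Rightarrow> 'n cmat \<times> 'n cmat \<times> 'n cmat \<times> 'n cmat" where
  "grad_data F p = (nabla1 F p, nabla1' F p, nabla2 F p, nabla2' F p)"

lemma grad_data_along_unit_J:
  assumes F: "smooth_on MM F" and p: "p \<in> MM"
  shows "((\<lambda>s. grad_data F (p + s *\<^sub>R unit_J)) has_vector_derivative
           grad_data (DD F) p + (0, 0, d2 F p, d2 F p)) (at 0)"
proof -
  obtain d where d: "iterated_derivs_on MM F d"
    using F unfolding smooth_on_iff_iterated_derivs by blast
  note dD = iterated_derivs_on_DD[OF d]
  note pJ = add_unit_J_in_MM[OF p]
  have N1: "((\<lambda>s. nabla1 F (p + s *\<^sub>R unit_J)) has_vector_derivative nabla1 (DD F) p) (at 0)"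
    using has_vector_derivative_ip_repr_along_unit_J[OF d p, of "\<lambda>X. (X ** fst p, 0)"]
    by (simp add: nabla1_eq_ip_repr[OF d pJ] nabla1_eq_ip_repr[OF dD p] del: fst_add)
  have N1': "((\<lambda>s. nabla1' F (p + s *\<^sub>R unit_J)) has_vector_derivative nabla1' (DD F) p) (at 0)"
    using has_vector_derivative_ip_repr_along_unit_J[OF d p, of "\<lambda>X. (fst p ** X, 0)"]
    by (simp add: nabla1'_eq_ip_repr[OF d pJ] nabla1'_eq_ip_repr[OF dD p] del: fst_add)
  have D2: "((\<lambda>s. d2 F (p + s *\<^sub>R unit_J)) has_vector_derivative d2 (DD F) p) (at 0)"
    using has_vector_derivative_ip_repr_along_unit_J[OF d p, of "\<lambda>X. (0, X)"]
    by (simp add: d2_eq_ip_repr[OF d pJ] d2_eq_ip_repr[OF dD p] del: fst_add)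
  have J: "((\<lambda>s. snd (p + s *\<^sub>R unit_J)) has_vector_derivative mat 1) (at 0)"
    unfolding snd_add_unit_J has_vector_derivative_def by (auto intro!: derivative_eq_intros)
  have N2: "((\<lambda>s. nabla2 F (p + s *\<^sub>R unit_J)) has_vector_derivative nabla2 (DD F) p + d2 F p) (at 0)"
    using matrix_mult.has_vector_derivative[OF J D2] by (simp add: nabla2_def)
  have N2': "((\<lambda>s. nabla2' F (p + s *\<^sub>R unit_J)) has_vector_derivative nabla2' (DD F) p + d2 F p) (at 0)"
    using matrix_mult.has_vector_derivative[OF D2 J] by (simp add: nabla2'_def add.commute)
  show ?thesis
    using has_vector_derivative_Pair[OF N1 has_vector_derivative_Pair[OF N1'
          has_vector_derivative_Pair[OF N2 N2']]]
    by (simp add: grad_data_def)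
qed

lemma bounded_linear_rr: "bounded_linear (rr :: 'n::{finite,linorder} cmat \<Rightarrow> 'n cmat)"
  by (rule bounded_linearI') (simp_all add: rr_def upper_def lower_def vec_eq_iff algebra_simps)

lemmas rr_add = linear_add[OF bounded_linear.linear[OF bounded_linear_rr]]
  and rr_diff = linear_diff[OF bounded_linear.linear[OF bounded_linear_rr]]
  and rr_scaleR = linear_scale[OF bounded_linear.linear[OF bounded_linear_rr]]
  and rr_zero = linear_0[OF bounded_linear.linear[OF bounded_linear_rr]]

lemma rplus_minus_rminus: "rplus X - rminus X = X"
  by (simp add: rplus_def rminus_def algebra_simps flip: scaleR_add_left)

definition bracket2_form ::
    "'n::{finite,linorder} cmat \<times> 'n cmat \<times> 'n cmat \<times> 'n cmat
      \<Rightarrow> 'n cmat \<times> 'n cmat \<times> 'n cmat \<times> 'n cmat \<Rightarrow> real" where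
  "bracket2_form = (\<lambda>(A, A', N, N') (B, B', M, M').
      ip (rr A) B - ip (rr A') B' + ip (N - N') (rplus M' - rminus M)
    + ip A (rplus M' - rminus M) - ip B (rplus N' - rminus N))"

lemma bracket2_eq_bracket2_form: "bracket2 F H p = bracket2_form (grad_data F p) (grad_data H p)"
  by (simp add: bracket2_def bracket2_form_def grad_data_def)

lemma bilinear_bracket2_form: "bilinear bracket2_form"
  unfolding bilinear_def bracket2_form_def rplus_def rminus_def
  by (auto intro!: linearI split: prod.splits simp: ip.add_left ip.add_right ip.diff_left ip.diff_right
      ip.scaleR_left ip.scaleR_right rr_add rr_diff rr_scaleR add_divide_distrib algebra_simps)

interpretation bracket2_form: bounded_bilinear "bracket2_form :: 'n::{finite,linorder} cmat \<times> _ \<Rightarrow> _"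
  by (rule bilinear_conv_bounded_bilinear[THEN iffD1, OF bilinear_bracket2_form])

lemma DD_bracket2:
  assumes F: "smooth_on MM F" and H: "smooth_on MM H" and p: "p \<in> MM"
  shows "DD (bracket2 F H) p =
           bracket2_form (grad_data (DD F) p + (0, 0, d2 F p, d2 F p)) (grad_data H p)
         + bracket2_form (grad_data F p) (grad_data (DD H) p + (0, 0, d2 H p, d2 H p))"
proof -
  have "((\<lambda>s. bracket2 F H (p + s *\<^sub>R unit_J)) has_vector_derivative
           bracket2_form (grad_data F p) (grad_data (DD H) p + (0, 0, d2 H p, d2 H p))
         + bracket2_form (grad_data (DD F) p + (0, 0, d2 F p, d2 F p)) (grad_data H p)) (at 0)"
    unfolding bracket2_eq_bracket2_form
    using bracket2_form.has_vector_derivative[OF grad_data_along_unit_J[OF F p]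
        grad_data_along_unit_J[OF H p]]
    by simp
  then show ?thesis
    unfolding DD_eq_deriv_unit_J
    by (intro DERIV_imp_deriv) (simp add: has_real_derivative_iff_has_vector_derivative add.commute)
qed

lemma bracket2_form_correction_left: "bracket2_form (0, 0, X, X) (B, B', M, M') = - ip B X"
  by (simp add: bracket2_form_def rplus_minus_rminus rr_zero ip.zero_left ip.zero_right)

lemma bracket2_form_correction_right:
  "bracket2_form (A, A', N, N') (0, 0, Y, Y) = ip (N - N') Y + ip A Y"
  by (simp add: bracket2_form_def rplus_minus_rminus rr_zero ip.zero_left ip.zero_right)

lemma ip_commutator: "ip (J ** A - A ** J) B = ip J (A ** B - B ** A)"
proof -
  have "ip (J ** A) B = ip J (A ** B)"
    by (simp add: ip_def matrix_mul_assoc)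
  moreover have "ip (A ** J) B = ip J (B ** A)"
    unfolding ip_def by (metis matrix_mul_assoc trace_mul_sym)
  ultimately show ?thesis
    by (simp add: ip.diff_left ip.diff_right)
qed

lemma lieD_bracket2_eq_bracket1:
  assumes "smooth_on MM F" "smooth_on MM H" "p \<in> MM"
  shows "lieD bracket2 F H p = bracket1 F H p"
proof -
  have "lieD bracket2 F H p
      = bracket2_form (0, 0, d2 F p, d2 F p) (grad_data H p)
      + bracket2_form (grad_data F p) (0, 0, d2 H p, d2 H p)"
    using DD_bracket2[OF assms]
    by (simp add: lieD_def bracket2_eq_bracket2_form bracket2_form.add_left bracket2_form.add_right)
  also have "\<dots> = ip (nabla2 F p - nabla2' F p) (d2 H p) + ip (nabla1 F p) (d2 H p)
      - ip (nabla1 H p) (d2 F p)"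
    by (simp add: grad_data_def bracket2_form_correction_left bracket2_form_correction_right)
  also have "\<dots> = bracket1 F H p"
    by (simp add: bracket1_def nabla2_def nabla2'_def ip_commutator)
  finally show ?thesis .
qed

section \<open>Compatibility\<close>

lemma poisson_bracket_smooth:
  "poisson_bracket P \<Longrightarrow> smooth_on MM F \<Longrightarrow> smooth_on MM H \<Longrightarrow> smooth_on MM (P F H)"
  unfolding poisson_bracket_def by blast

lemma poisson_bracket_lincomb_left:
  "poisson_bracket P \<Longrightarrow> smooth_on MM F \<Longrightarrow> smooth_on MM H \<Longrightarrow> smooth_on MM K \<Longrightarrow> p \<in> MM \<Longrightarrow>
    P (\<lambda>q. a * F q + b * H q) K p = a * P F K p + b * P H K p"
  unfolding poisson_bracket_def by blast

lemma poisson_bracket_antisym: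
  "poisson_bracket P \<Longrightarrow> smooth_on MM F \<Longrightarrow> smooth_on MM H \<Longrightarrow> p \<in> MM \<Longrightarrow>
    P F H p = - P H F p"
  unfolding poisson_bracket_def by blast

lemma poisson_bracket_leibniz:
  "poisson_bracket P \<Longrightarrow> smooth_on MM F \<Longrightarrow> smooth_on MM H \<Longrightarrow> smooth_on MM K \<Longrightarrow> p \<in> MM \<Longrightarrow>
    P F (\<lambda>q. H q * K q) p = P F H p * K p + H p * P F K p"
  unfolding poisson_bracket_def by blast

lemma poisson_bracket_jacobi:
  "poisson_bracket P \<Longrightarrow> smooth_on MM F \<Longrightarrow> smooth_on MM H \<Longrightarrow> smooth_on MM K \<Longrightarrow> p \<in> MM \<Longrightarrow>
    P F (P H K) p + P H (P K F) p + P K (P F H) p = 0"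
  unfolding poisson_bracket_def by blast

lemma poisson_bracket_lincomb_right:
  assumes P: "poisson_bracket P" and F: "smooth_on MM F"
    and A: "smooth_on MM A" and B: "smooth_on MM B" and p: "p \<in> MM"
  shows "P F (\<lambda>q. a * A q + b * B q) p = a * P F A p + b * P F B p"
proof -
  have "P F (\<lambda>q. a * A q + b * B q) p = - P (\<lambda>q. a * A q + b * B q) F p"
    by (rule poisson_bracket_antisym[OF P F smooth_on_lincomb[OF A B] p])
  also have "\<dots> = - (a * P A F p + b * P B F p)"
    by (simp add: poisson_bracket_lincomb_left[OF P A B F p])
  also have "\<dots> = a * P F A p + b * P F B p"
    using poisson_bracket_antisym[OF P A F p] poisson_bracket_antisym[OF P B F p] by simp
  finally show ?thesis .
qed

lemma poisson_bracket_diff_right: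
  assumes P: "poisson_bracket P" and "smooth_on MM F" "smooth_on MM A" "smooth_on MM B" "p \<in> MM"
  shows "P F (\<lambda>q. A q - B q) p = P F A p - P F B p"
  using poisson_bracket_lincomb_right[OF assms, of 1 "-1"] by simp

text \<open>Since \<open>Z = Z * K\<close> for the smooth indicator \<open>K\<close> of the complement of \<open>MM\<close>, the Leibniz
  rule forces every bracket with a function \<open>Z\<close> vanishing on \<open>MM\<close> to vanish there.\<close>

lemma poisson_bracket_local:
  fixes A B :: "'n::finite pt \<Rightarrow> real"
  assumes P: "poisson_bracket P" and F: "smooth_on MM F"
    and A: "smooth_on MM A" and B: "smooth_on MM B"
    and eq: "\<And>q. q \<in> MM \<Longrightarrow> A q = B q" and p: "p \<in> MM"
  shows "P F A p = P F B p"
proof -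
  define Z where "Z q = A q - B q" for q
  define K :: "'n pt \<Rightarrow> real" where "K q = (if q \<in> MM then 0 else 1)" for q
  have Z: "smooth_on MM Z"
    unfolding Z_def[abs_def] by (rule smooth_on_diff[OF A B])
  have K: "smooth_on MM K"
    unfolding K_def[abs_def] by (rule smooth_on_indicator_compl[OF open_MM])
  have "(\<lambda>q. Z q * K q) = Z"
    by (auto simp: Z_def K_def eq)
  then have "P F Z p = P F Z p * K p + Z p * P F K p"
    using poisson_bracket_leibniz[OF P F Z K p] by simp
  also have "\<dots> = 0"
    using p by (simp add: Z_def K_def eq)
  finally show ?thesis
    using poisson_bracket_diff_right[OF P F A B p] unfolding Z_def by simp
qed

lemma DD_sum3_eq_0:
  assumes "smooth_on MM f" "smooth_on MM g" "smooth_on MM h" and p: "p \<in> MM"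
    and sum: "\<And>q. q \<in> MM \<Longrightarrow> f q + g q + h q = 0"
  shows "DD f p + DD g p + DD h p = 0"
proof -
  have "((\<lambda>t. f (p + t *\<^sub>R unit_J) + g (p + t *\<^sub>R unit_J) + h (p + t *\<^sub>R unit_J))
      has_real_derivative DD f p + DD g p + DD h p) (at 0)"
    by (intro DERIV_add DERIV_DD assms)
  moreover have "(\<lambda>t. f (p + t *\<^sub>R unit_J) + g (p + t *\<^sub>R unit_J) + h (p + t *\<^sub>R unit_J)) = (\<lambda>t. 0)"
    using sum add_unit_J_in_MM[OF p] by auto
  ultimately have "((\<lambda>t. 0) has_real_derivative DD f p + DD g p + DD h p) (at 0)"
    by simp
  then show ?thesis
    using DERIV_const DERIV_unique by blast
qed

lemma lieD_eq: "lieD P H K = (\<lambda>q. DD (P H K) q - P (DD H) K q - P H (DD K) q)"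
  by (simp add: fun_eq_iff lieD_def)

lemma smooth_on_lieD:
  assumes P: "poisson_bracket P" and H: "smooth_on MM H" and K: "smooth_on MM K"
  shows "smooth_on MM (lieD P H K)"
  unfolding lieD_eq
  by (intro smooth_on_diff smooth_on_DD poisson_bracket_smooth[OF P] H K)

lemma lieD_mixed_bracket:
  assumes P: "poisson_bracket P" and Q: "poisson_bracket Q"
    and QL: "\<And>F H p. smooth_on MM F \<Longrightarrow> smooth_on MM H \<Longrightarrow> p \<in> MM \<Longrightarrow> Q F H p = lieD P F H p"
    and F: "smooth_on MM F" and H: "smooth_on MM H" and K: "smooth_on MM K" and p: "p \<in> MM"
  shows "Q F (P H K) p + P F (Q H K) p =
    DD (P F (P H K)) p - P (DD F) (P H K) p - P F (P (DD H) K) p - P F (P H (DD K)) p"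
proof -
  note PHK = poisson_bracket_smooth[OF P H K]
  have "P F (Q H K) p = P F (lieD P H K) p"
    using QL[OF H K] p
    by (intro poisson_bracket_local[OF P F poisson_bracket_smooth[OF Q H K] smooth_on_lieD[OF P H K]])
  also have "\<dots> = P F (DD (P H K)) p - P F (P (DD H) K) p - P F (P H (DD K)) p"
    unfolding lieD_eq
    using poisson_bracket_diff_right[OF P F smooth_on_diff[OF smooth_on_DD[OF PHK]
          poisson_bracket_smooth[OF P smooth_on_DD[OF H] K]]
          poisson_bracket_smooth[OF P H smooth_on_DD[OF K]] p]
      poisson_bracket_diff_right[OF P F smooth_on_DD[OF PHK]
          poisson_bracket_smooth[OF P smooth_on_DD[OF H] K] p]
    by simp
  finally show ?thesis
    using QL[OF F PHK p] by (simp add: lieD_def)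
qed

lemma lieD_mixed_jacobi:
  assumes P: "poisson_bracket P" and Q: "poisson_bracket Q"
    and QL: "\<And>F H p. smooth_on MM F \<Longrightarrow> smooth_on MM H \<Longrightarrow> p \<in> MM \<Longrightarrow> Q F H p = lieD P F H p"
    and F: "smooth_on MM F" and H: "smooth_on MM H" and K: "smooth_on MM K" and p: "p \<in> MM"
  shows "(Q F (P H K) p + P F (Q H K) p) + (Q H (P K F) p + P H (Q K F) p)
       + (Q K (P F H) p + P K (Q F H) p) = 0"
proof -
  note PP = poisson_bracket_smooth[OF P]
  have "DD (P F (P H K)) p + DD (P H (P K F)) p + DD (P K (P F H)) p = 0"
    using poisson_bracket_jacobi[OF P F H K]
    by (intro DD_sum3_eq_0[OF PP[OF F PP[OF H K]] PP[OF H PP[OF K F]] PP[OF K PP[OF F H]] p])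
  moreover have "P (DD F) (P H K) p + P H (P K (DD F)) p + P K (P (DD F) H) p = 0"
    by (rule poisson_bracket_jacobi[OF P smooth_on_DD[OF F] H K p])
  moreover have "P F (P (DD H) K) p + P (DD H) (P K F) p + P K (P F (DD H)) p = 0"
    by (rule poisson_bracket_jacobi[OF P F smooth_on_DD[OF H] K p])
  moreover have "P F (P H (DD K)) p + P H (P (DD K) F) p + P (DD K) (P F H) p = 0"
    by (rule poisson_bracket_jacobi[OF P F H smooth_on_DD[OF K] p])
  ultimately show ?thesis
    using lieD_mixed_bracket[OF P Q QL F H K p] lieD_mixed_bracket[OF P Q QL H K F p]
      lieD_mixed_bracket[OF P Q QL K F H p]
    by linarith
qed

lemma poisson_bracket_lincomb_lieD:
  fixes P Q :: "('n::finite pt \<Rightarrow> real) \<Rightarrow> ('n pt \<Rightarrow> real) \<Rightarrow> 'n pt \<Rightarrow> real"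
  assumes P: "poisson_bracket P" and Q: "poisson_bracket Q"
    and QL: "\<And>F H p. smooth_on MM F \<Longrightarrow> smooth_on MM H \<Longrightarrow> p \<in> MM \<Longrightarrow> Q F H p = lieD P F H p"
  shows "poisson_bracket (\<lambda>F H p. a * Q F H p + b * P F H p)"
  unfolding poisson_bracket_def
proof (intro conjI allI impI ballI)
  fix F H :: "'n pt \<Rightarrow> real"
  assume "smooth_on MM F" "smooth_on MM H"
  then show "smooth_on MM (\<lambda>p. a * Q F H p + b * P F H p)"
    by (intro smooth_on_lincomb poisson_bracket_smooth[OF Q] poisson_bracket_smooth[OF P])
next
  fix F H K :: "'n pt \<Rightarrow> real" and c d :: real and p :: "'n pt"
  assume F: "smooth_on MM F" and H: "smooth_on MM H" and K: "smooth_on MM K" and p: "p \<in> MM"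
  show "a * Q (\<lambda>q. c * F q + d * H q) K p + b * P (\<lambda>q. c * F q + d * H q) K p
      = c * (a * Q F K p + b * P F K p) + d * (a * Q H K p + b * P H K p)"
    by (simp add: poisson_bracket_lincomb_left[OF Q F H K p]
        poisson_bracket_lincomb_left[OF P F H K p] algebra_simps)
  show "a * Q F H p + b * P F H p = - (a * Q H F p + b * P H F p)"
    by (simp add: poisson_bracket_antisym[OF Q F H p] poisson_bracket_antisym[OF P F H p])
  show "a * Q F (\<lambda>q. H q * K q) p + b * P F (\<lambda>q. H q * K q) p
      = (a * Q F H p + b * P F H p) * K p + H p * (a * Q F K p + b * P F K p)"
    by (simp add: poisson_bracket_leibniz[OF Q F H K p] poisson_bracket_leibniz[OF P F H K p]
        algebra_simps)
  let ?C = "\<lambda>F H p. a * Q F H p + b * P F H p"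
  have nested: "?C X (?C Y Z) p
      = a * a * Q X (Q Y Z) p + a * b * (Q X (P Y Z) p + P X (Q Y Z) p) + b * b * P X (P Y Z) p"
    if "smooth_on MM X" "smooth_on MM Y" "smooth_on MM Z" for X Y Z
    using that poisson_bracket_lincomb_right[OF Q _ poisson_bracket_smooth[OF Q] poisson_bracket_smooth[OF P] p]
      poisson_bracket_lincomb_right[OF P _ poisson_bracket_smooth[OF Q] poisson_bracket_smooth[OF P] p]
    by (simp add: algebra_simps)
  have "?C F (?C H K) p + ?C H (?C K F) p + ?C K (?C F H) p
      = a * a * (Q F (Q H K) p + Q H (Q K F) p + Q K (Q F H) p)
      + a * b * ((Q F (P H K) p + P F (Q H K) p) + (Q H (P K F) p + P H (Q K F) p)
                 + (Q K (P F H) p + P K (Q F H) p))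
      + b * b * (P F (P H K) p + P H (P K F) p + P K (P F H) p)"
    by (simp only: nested[OF F H K] nested[OF H K F] nested[OF K F H]) (simp add: algebra_simps)
  then show "?C F (?C H K) p + ?C H (?C K F) p + ?C K (?C F H) p = 0"
    by (simp add: poisson_bracket_jacobi[OF Q F H K p] poisson_bracket_jacobi[OF P F H K p]
        lieD_mixed_jacobi[OF P Q QL F H K p])
qed

theorem proposition2p2:
  assumes P1: "poisson_bracket (bracket1 :: ('n::{finite,linorder} pt \<Rightarrow> real) \<Rightarrow> _)"
      and P2: "poisson_bracket (bracket2 :: ('n::{finite,linorder} pt \<Rightarrow> real) \<Rightarrow> _)"
  shows "(\<forall>F H :: 'n pt \<Rightarrow> real. smooth_on MM F \<longrightarrow> smooth_on MM H \<longrightarrow>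
            (\<forall>p\<in>MM. bracket1 F H p = lieD bracket2 F H p))
       \<and> (\<forall>a b :: real. poisson_bracket
            (\<lambda>(F :: 'n pt \<Rightarrow> real) H p. a * bracket1 F H p + b * bracket2 F H p))"
proof -
  have compatible: "bracket1 F H p = lieD bracket2 F H p"
    if "smooth_on MM F" "smooth_on MM H" "p \<in> MM" for F H :: "'n pt \<Rightarrow> real" and p
    using lieD_bracket2_eq_bracket1[OF that] by simp
  then show ?thesis
    using poisson_bracket_lincomb_lieD[OF P2 P1] by blast
qed

end
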